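(* Let $X$ be a nonempty set, let $(Y,\|\cdot,\cdot\|)$ be a linear $2$-normed space of dimension $d$ with $2\le d<\infty$, and let $\mathcal I\subset 2^{\mathbb N}$ be an admissible ideal. Let $f,f_n:X\to Y$ ($n\in\mathbb N$). If $\{f_n\}$ is $\mathcal I^*$-equal convergent to $f$, then $\{f_n\}$ is $\mathcal I$-equal convergent to $f$.
   Context: A $2$-norm on a real vector space $Y$ of dimension $d$, $2\le d<\infty$, is a function $\|\cdot,\cdot\|:Y\times Y\to\mathbb R$ such that: $\|x,y\|=0$ iff $x,y$ are linearly dependent; $\|x,y\|=\|y,x\|$; $\|\alpha x,y\|=|\alpha|\,\|x,y\|$ for $\alpha\in\mathbb R$; $\|x+y,z\|\le\|x,z\|+\|y,z\|$. An ideal $\mathcal I\subset 2^{\mathbb N}$ is a family closed under finite unions and subsets; it is admissible if it is proper ($\mathbb N\notin\mathcal I$) and contains all singletons. $\mathcal F(\mathcal I)=\{A\subset\mathbb N:\mathbb N\setminus A\in\mathcal I\}$. A real sequence $\{a_n\}$ is $\mathcal I$-convergent to $a$ ($\mathcal I\text{-}\lim a_n=a$) if for every $\varepsilon>0$, $\{n:|a_n-a|\ge\varepsilon\}\in\mathcal I$. $\{f_n\}$ is $\mathcal I$-equal convergent to $f$ if there is a sequence $\{\varepsilon_n\}$ of positive reals with $\mathcal I\text{-}\lim\varepsilon_n=0$ such that for every $x\in X$ and every $z\in Y$, $\{n\in\mathbb N:\|f_n(x)-f(x),z\|\ge\varepsilon_n\}\in\mathcal I$. $\{f_n\}$ is $\mathcal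 I^*$-equal convergent to $f$ if there exist a set $M=\{m_1<m_2<\cdots\}\in\mathcal F(\mathcal I)$ and a sequence $\{\varepsilon_k\}$ of positive reals with $\lim_{k\to\infty}\varepsilon_k=0$ such that for every $x\in X$ there is $p\in\mathbb N$ with $\|f_{m_k}(x)-f(x),z\|<\varepsilon_k$ for all $k\ge p$ and all $z\in Y$. *)

theory Defs
  imports "HOL-Analysis.Analysis" "HOL-Library.Infinite_Set"
begin

definition two_norm :: "('b::real_vector \<Rightarrow> 'b \<Rightarrow> real) \<Rightarrow> bool" where
  "two_norm N \<longleftrightarrow>
     (\<forall>x y. N x y = 0 \<longleftrightarrow> (\<exists>a b. (a, b) \<noteq> (0::real, 0::real) \<and> a *\<^sub>R x + b *\<^sub>R y = 0)) \<and>
     (\<forall>x y. N x y = N y x) \<and>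
     (\<forall>a x y. N (a *\<^sub>R x) y = \<bar>a\<bar> * N x y) \<and>
     (\<forall>x y z. N (x + y) z \<le> N x z + N y z)"

definition ideal_nat :: "nat set set \<Rightarrow> bool" where
  "ideal_nat I \<longleftrightarrow> (\<forall>A\<in>I. \<forall>B\<in>I. A \<union> B \<in> I) \<and> (\<forall>A\<in>I. \<forall>B. B \<subseteq> A \<longrightarrow> B \<in> I)"

definition admissible_ideal :: "nat set set \<Rightarrow> bool" where
  "admissible_ideal I \<longleftrightarrow> ideal_nat I \<and> UNIV \<notin> I \<and> (\<forall>n. {n} \<in> I)"

definition filter_of_ideal :: "nat set set \<Rightarrow> nat set set" where
  "filter_of_ideal I = {A. UNIV - A \<in> I}"

definition I_lim :: "nat set set \<Rightarrow> (nat \<Rightarrow> real) \<Rightarrow> real \<Rightarrow> bool" where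
  "I_lim I a l \<longleftrightarrow> (\<forall>\<epsilon>>0. {n. \<bar>a n - l\<bar> \<ge> \<epsilon>} \<in> I)"

definition I_equal_conv ::
  "nat set set \<Rightarrow> ('b::real_vector \<Rightarrow> 'b \<Rightarrow> real) \<Rightarrow> 'a set \<Rightarrow> (nat \<Rightarrow> 'a \<Rightarrow> 'b) \<Rightarrow> ('a \<Rightarrow> 'b) \<Rightarrow> bool" where
  "I_equal_conv I N X fs f \<longleftrightarrow>
     (\<exists>eps. (\<forall>n. eps n > 0) \<and> I_lim I eps 0 \<and>
        (\<forall>x\<in>X. \<forall>z. {n. N (fs n x - f x) z \<ge> eps n} \<in> I))"

definition I_star_equal_conv ::
  "nat set set \<Rightarrow> ('b::real_vector \<Rightarrow> 'b \<Rightarrow> real) \<Rightarrow> 'a set \<Rightarrow> (nat \<Rightarrow> 'a \<Rightarrow> 'b) \<Rightarrow> ('a \<Rightarrow> 'b) \<Rightarrow> bool" where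
  "I_star_equal_conv I N X fs f \<longleftrightarrow>
     (\<exists>M eps. M \<in> filter_of_ideal I \<and> infinite M \<and> (\<forall>k. eps k > 0) \<and> eps \<longlonglongrightarrow> 0 \<and>
        (\<forall>x\<in>X. \<exists>p. \<forall>k\<ge>p. \<forall>z. N (fs (enumerate M k) x - f x) z < eps k))"

end

theory Submission
  imports Defs
begin

text \<open>Let \<open>M = {m\<^sub>1 < m\<^sub>2 < \<dots>}\<close> and \<open>\<epsilon>\<^sub>k \<rightarrow> 0\<close> witness \<open>\<I>\<^sup>*\<close>-equal convergence. Spread the
  \<open>\<epsilon>\<^sub>k\<close> over \<open>\<nat>\<close> by putting \<open>\<epsilon>\<^sub>k\<close> at \<open>m\<^sub>k\<close> and \<open>1\<close> off \<open>M\<close>. Every exceptional set that occurs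
  then meets \<open>M\<close> in only finitely many \<open>m\<^sub>k\<close>, so it lies in the union of \<open>\<nat> - M \<in> \<I>\<close> and a finite
  set, hence in \<open>\<I>\<close>.\<close>

lemma finite_in_admissible_ideal:
  assumes "admissible_ideal I" "finite A"
  shows "A \<in> I"
  using assms(2)
proof (induction A rule: finite_induct)
  case empty
  have "{0} \<in> I" using assms(1) by (simp add: admissible_ideal_def)
  then show ?case using assms(1) unfolding admissible_ideal_def ideal_nat_def by blast
next
  case (insert a A)
  have "{a} \<in> I" using assms(1) by (simp add: admissible_ideal_def)
  then show ?case using insert assms(1) unfolding admissible_ideal_def ideal_nat_def
    by (metis insert_is_Un)
qed

lemma in_admissible_ideal_if_finite_Int_filter:
  assumes "admissible_ideal I" "M \<in> filter_of_ideal I" "finite (S \<inter> M)"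
  shows "S \<in> I"
proof -
  have "UNIV - M \<in> I" using assms(2) by (simp add: filter_of_ideal_def)
  moreover have "S \<inter> M \<in> I" using finite_in_admissible_ideal[OF assms(1,3)] .
  moreover have "S \<subseteq> (UNIV - M) \<union> (S \<inter> M)" by blast
  ultimately show ?thesis using assms(1) unfolding admissible_ideal_def ideal_nat_def by blast
qed

lemma finite_Int_if_eventually_enumerate_notin:
  fixes M :: "nat set"
  assumes "infinite M" "eventually (\<lambda>k. enumerate M k \<notin> S) sequentially"
  shows "finite (S \<inter> M)"
proof -
  obtain K where K: "\<And>k. K \<le> k \<Longrightarrow> enumerate M k \<notin> S"
    using assms(2) by (auto simp: eventually_sequentially)
  have "S \<inter> M \<subseteq> enumerate M ` {..<K}"
  proof
    fix n assume n: "n \<in> S \<inter> M"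
    then obtain k where k: "n = enumerate M k" using range_enumerate[OF assms(1)] by blast
    with n K have "k < K" by (meson IntD1 not_le)
    with k show "n \<in> enumerate M ` {..<K}" by blast
  qed
  then show ?thesis by (rule finite_subset) simp
qed

lemma in_admissible_ideal_if_eventually_enumerate_notin:
  assumes "admissible_ideal I" "M \<in> filter_of_ideal I" "infinite M"
    and "eventually (\<lambda>k. enumerate M k \<notin> S) sequentially"
  shows "S \<in> I"
  using assms by (metis in_admissible_ideal_if_finite_Int_filter finite_Int_if_eventually_enumerate_notin)

lemma I_star_equal_conv_imp_I_equal_conv:
  assumes adm: "admissible_ideal I" and "I_star_equal_conv I N X fs f"
  shows "I_equal_conv I N X fs f"
proof -
  obtain M eps where MF: "M \<in> filter_of_ideal I" and inf: "infinite M"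
    and pos: "\<And>k. eps k > 0" and lim: "eps \<longlonglongrightarrow> 0"
    and conv: "\<forall>x\<in>X. \<exists>p. \<forall>k\<ge>p. \<forall>z. N (fs (enumerate M k) x - f x) z < eps k"
    using assms(2) unfolding I_star_equal_conv_def by blast
  define e where "e n = (if n \<in> M then eps (inv (enumerate M) n) else 1)" for n
  have e_enumerate: "e (enumerate M k) = eps k" for k
    using strict_mono_enumerate[OF inf] enumerate_in_set[OF inf]
    by (simp add: e_def strict_mono_imp_inj_on)
  have "I_lim I e 0"
    unfolding I_lim_def
  proof (intro allI impI)
    fix \<epsilon> :: real assume "\<epsilon> > 0"
    with lim have "eventually (\<lambda>k. \<bar>eps k\<bar> < \<epsilon>) sequentially"
      by (auto simp: tendsto_iff dist_real_def)
    then have "eventually (\<lambda>k. enumerate M k \<notin> {n. \<bar>e n - 0\<bar> \<ge> \<epsilon>}) sequentially"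
      by eventually_elim (simp add: e_enumerate)
    then show "{n. \<bar>e n - 0\<bar> \<ge> \<epsilon>} \<in> I"
      by (rule in_admissible_ideal_if_eventually_enumerate_notin[OF adm MF inf])
  qed
  moreover have "{n. N (fs n x - f x) z \<ge> e n} \<in> I" if "x \<in> X" for x z
  proof -
    obtain p where "\<forall>k\<ge>p. N (fs (enumerate M k) x - f x) z < eps k"
      using conv \<open>x \<in> X\<close> by blast
    then have "eventually (\<lambda>k. enumerate M k \<notin> {n. N (fs n x - f x) z \<ge> e n}) sequentially"
      by (auto simp: eventually_sequentially e_enumerate not_le)
    then show ?thesis
      by (rule in_admissible_ideal_if_eventually_enumerate_notin[OF adm MF inf])
  qed
  moreover have "e n > 0" for n using pos by (simp add: e_def)
  ultimately show ?thesis unfolding I_equal_conv_def by blast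
qed

theorem mainTheorem5:
  fixes X :: "'a set" and N :: "'b::real_vector \<Rightarrow> 'b \<Rightarrow> real"
    and I :: "nat set set" and f :: "'a \<Rightarrow> 'b" and fs :: "nat \<Rightarrow> 'a \<Rightarrow> 'b" and d :: nat
  assumes "X \<noteq> {}"
    and "\<exists>B. finite B \<and> span B = (UNIV :: 'b set)"
    and "dim (UNIV :: 'b set) = d" and "2 \<le> d"
    and "two_norm N"
    and "admissible_ideal I"
    and "I_star_equal_conv I N X fs f"
  shows "I_equal_conv I N X fs f"
  using I_star_equal_conv_imp_I_equal_conv[OF assms(6,7)] .

end
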